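(* Let $E/\mathbb{Q}$ be a strong Weil curve of conductor $N_E$ with notation as in the context. Let $q$ be a positive divisor of $N_E$, let $q^\alpha\| N_E$, and let $W_q=\begin{pmatrix}q^\alpha a&b\\N_Ec&q^\alpha d\end{pmatrix}$ ($a,b,c,d\in\mathbb{Z}$) be an Atkin–Lehner involution of determinant $q^\alpha$, with $F_E|_2W_q=\lambda_qF_E$, $\lambda_q\in\{\pm1\}$. Then $$\widehat{\mathfrak{Z}}_E(W_qz)=\mathfrak{Z}_E^{+}\big(\lambda_q(\mathcal{E}_E(z)-\Omega_q(F_E))\big)-\frac{\deg(\phi_E)}{4\pi\|F_E\|^2}\cdot\overline{\lambda_q(\mathcal{E}_E(z)-\Omega_q(F_E))},$$ where $\Omega_q(F_E):=-2\pi i\int_{W_q^{-1}i\infty}^{i\infty}F_E(z)\,dz$.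
   Context: $F_E=\sum a_E(n)q^n\in S_2(\Gamma_0(N_E))$ is the normalized newform of $E$, $\phi_E:X_0(N_E)\to E$ the modular parametrization, $\|F_E\|$ the Petersson norm, $\mathcal{E}_E(z)=-2\pi i\int_z^{i\infty}F_E(\tau)d\tau$, and $\Lambda_E$ the lattice with $E\cong\mathbb{C}/\Lambda_E$ (the period lattice of $F_E$). With $\zeta(\Lambda_E;\mathfrak{z})$ the Weierstrass zeta function and $S(\Lambda_E)=\lim_{s\to0^+}\sum_{w\in\Lambda_E\setminus\{0\}}w^{-2}|w|^{-2s}$, put $\mathfrak{Z}^+_E(\mathfrak{z})=\zeta(\Lambda_E;\mathfrak{z})-S(\Lambda_E)\mathfrak{z}$, $\mathfrak{Z}_E(\mathfrak{z})=\mathfrak{Z}^+_E(\mathfrak{z})-\frac{\deg(\phi_E)}{4\pi\|F_E\|^2}\overline{\mathfrak{z}}$ and $\widehat{\mathfrak{Z}}_E(z)=\mathfrak{Z}_E(\mathcal{E}_E(z))$. *)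

theory Defs
  imports "HOL-Complex_Analysis.Complex_Analysis"
begin

text \<open>Integer 2x2 matrices are encoded as quadruples (a,b,c,d) standing for
  the matrix with rows (a b) and (c d).\<close>

type_synonym imat = "int \<times> int \<times> int \<times> int"

definition uhp :: "complex set" where
  "uhp = {z. Im z > 0}"

definition mdet :: "imat \<Rightarrow> int" where
  "mdet M = (case M of (a,b,c,d) \<Rightarrow> a*d - b*c)"

definition moeb :: "imat \<Rightarrow> complex \<Rightarrow> complex" where
  "moeb M z = (case M of (a,b,c,d) \<Rightarrow> (of_int a * z + of_int b) / (of_int c * z + of_int d))"

definition slash2 :: "(complex \<Rightarrow> complex) \<Rightarrow> imat \<Rightarrow> complex \<Rightarrow> complex" where
  "slash2 F M z = (case M of (a,b,c,d) \<Rightarrow>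
      of_int (mdet M) * F (moeb M z) / (of_int c * z + of_int d)^2)"

definition SL2Z :: "imat set" where
  "SL2Z = {M. mdet M = 1}"

definition Gamma0 :: "nat \<Rightarrow> imat set" where
  "Gamma0 N = {(a,b,c,d). a*d - b*c = 1 \<and> int N dvd c}"

definition vanishing_expansion :: "(complex \<Rightarrow> complex) \<Rightarrow> bool" where
  "vanishing_expansion G \<longleftrightarrow> (\<exists>h::nat. h > 0 \<and> (\<exists>b :: nat \<Rightarrow> complex.
      \<forall>z\<in>uhp. (\<lambda>n. b n * exp (2 * pi * \<i> * of_nat n * z / of_nat h)) sums G z \<and> b 0 = 0))"

definition cusp_form2 :: "nat \<Rightarrow> (complex \<Rightarrow> complex) \<Rightarrow> bool" where
  "cusp_form2 N F \<longleftrightarrow> F holomorphic_on uhp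
     \<and> (\<forall>\<gamma>\<in>Gamma0 N. \<forall>z\<in>uhp. slash2 F \<gamma> z = F z)
     \<and> (\<forall>\<gamma>\<in>SL2Z. vanishing_expansion (slash2 F \<gamma>))"

definition has_q_expansion :: "(complex \<Rightarrow> complex) \<Rightarrow> (nat \<Rightarrow> complex) \<Rightarrow> bool" where
  "has_q_expansion F a \<longleftrightarrow> (\<forall>z\<in>uhp. (\<lambda>n. a n * exp (2 * pi * \<i> * of_nat n * z)) sums F z)"

definition int_to_inf :: "(complex \<Rightarrow> complex) \<Rightarrow> complex \<Rightarrow> complex" where
  "int_to_inf F z = Lim at_top (\<lambda>T::real. contour_integral (linepath z (z + \<i> * of_real T)) F)"

definition eichler :: "(complex \<Rightarrow> complex) \<Rightarrow> complex \<Rightarrow> complex" where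
  "eichler F z = - 2 * pi * \<i> * int_to_inf F z"

text \<open>Omega_M(F) = -2 pi i int_{M^{-1} i infinity}^{i infinity} F(z) dz.
  For M = (a,b,c,d) with c \<noteq> 0 the cusp M^{-1} i infinity is the rational
  number -d/c; the integral from it is the limit of integrals starting at
  -d/c + i eps as eps \<rightarrow> 0+.  If c = 0 the cusp is i infinity and Omega = 0.\<close>
definition Omega :: "(complex \<Rightarrow> complex) \<Rightarrow> imat \<Rightarrow> complex" where
  "Omega F M = (case M of (a,b,c,d) \<Rightarrow>
     (if c = 0 then 0
      else - 2 * pi * \<i> * Lim (at_right 0)
            (\<lambda>eps::real. int_to_inf F (complex_of_real (- of_int d / of_int c) + \<i> * of_real eps))))"

definition period_lattice :: "nat \<Rightarrow> (complex \<Rightarrow> complex) \<Rightarrow> complex set" where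
  "period_lattice N F = {Omega F \<gamma> | \<gamma>. \<gamma> \<in> Gamma0 N}"

definition weierstrass_zeta :: "complex set \<Rightarrow> complex \<Rightarrow> complex" where
  "weierstrass_zeta L z = 1 / z + infsum (\<lambda>w. 1 / (z - w) + 1 / w + z / w^2) (L - {0})"

definition lattice_S :: "complex set \<Rightarrow> complex" where
  "lattice_S L = Lim (at_right 0)
     (\<lambda>s::real. infsum (\<lambda>w. 1 / w^2 * complex_of_real (norm w powr (- 2 * s))) (L - {0}))"

definition Zplus :: "complex set \<Rightarrow> complex \<Rightarrow> complex" where
  "Zplus L w = weierstrass_zeta L w - lattice_S L * w"

text \<open>Z_E(w) = Z^+_E(w) - kappa * conj w, with kappa = deg(phi_E)/(4 pi ||F_E||^2).\<close>
definition Zfull :: "complex set \<Rightarrow> real \<Rightarrow> complex \<Rightarrow> complex" where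
  "Zfull L \<kappa> w = Zplus L w - complex_of_real \<kappa> * cnj w"

definition Zhat :: "nat \<Rightarrow> (complex \<Rightarrow> complex) \<Rightarrow> real \<Rightarrow> complex \<Rightarrow> complex" where
  "Zhat N F \<kappa> z = Zfull (period_lattice N F) \<kappa> (eichler F z)"

end

theory Submission
  imports Defs
begin

text \<open>
  The vanishing constant term of the expansion of \<open>F\<close> at \<open>i\<infinity>\<close> lets one integrate it
  termwise: \<open>F\<close> has a primitive \<open>G\<close> on the upper half plane tending to \<open>0\<close> at \<open>i\<infinity>\<close>,
  and the Eichler integral is \<open>2\<pi>i G\<close>. For an Atkin--Lehner matrix \<open>W\<close> the relation
  \<open>F|\<^sub>2W = \<lambda>F\<close> says that \<open>G \<circ> W - \<lambda>G\<close> has derivative zero, so it is a constant \<open>K\<close>.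
  Letting the argument tend to the cusp \<open>W\<^sup>-\<^sup>1 i\<infinity>\<close>, where \<open>G \<circ> W\<close> tends to \<open>0\<close>, identifies
  \<open>K\<close> with the period \<open>\<Omega>(F)\<close>, which gives the transformation law of the Eichler integral,
  and the formula for \<open>Z\<^sub>E\<close> is that law substituted into its definition.
\<close>

definition decaying_primitive :: "(complex \<Rightarrow> complex) \<Rightarrow> (complex \<Rightarrow> complex) \<Rightarrow> bool" where
  "decaying_primitive G F \<longleftrightarrow>
     (\<forall>w\<in>uhp. (G has_field_derivative F w) (at w)) \<and>
     (\<forall>x::real. ((\<lambda>T::real. G (of_real x + \<i> * of_real T)) \<longlongrightarrow> 0) at_top)"

lemma convex_uhp: "convex uhp"
  unfolding uhp_def using convex_halfspace_Im_gt[of 0] by simp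

subsection \<open>Primitives of cusp forms\<close>

definition q_param :: "nat \<Rightarrow> complex \<Rightarrow> complex" where
  "q_param h z = exp (2 * pi * \<i> * z / of_nat h)"

lemma norm_q_param: "norm (q_param h z) = exp (- 2 * pi * Im z / h)"
  unfolding q_param_def norm_exp_eq_Re by simp

lemma exp_eq_q_param_power: "exp (2 * pi * \<i> * of_nat n * z / of_nat h) = q_param h z ^ n"
proof -
  have "2 * pi * \<i> * of_nat n * z / of_nat h = of_nat n * (2 * pi * \<i> * z / of_nat h)"
    by simp
  then show ?thesis unfolding q_param_def by (simp only: exp_of_nat_mult)
qed

lemma norm_q_param_less_1: "h > 0 \<Longrightarrow> z \<in> uhp \<Longrightarrow> norm (q_param h z) < 1"
  by (simp add: norm_q_param uhp_def)

text \<open>Every point of the unit disc is dominated by \<open>q_param h (iy)\<close> for small \<open>y > 0\<close>.\<close>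
lemma abs_summable_of_q_expansion:
  assumes h: "h > 0" and conv: "\<And>z. z \<in> uhp \<Longrightarrow> summable (\<lambda>n. b n * q_param h z ^ n)"
    and w: "norm w < 1"
  shows "summable (\<lambda>n. norm (b n * w ^ n))"
proof -
  define y where "y = real h * (1 - norm w) / (4 * pi)"
  have "\<i> * of_real y \<in> uhp"
    using h w by (simp add: y_def uhp_def)
  then have s: "summable (\<lambda>n. b n * q_param h (\<i> * of_real y) ^ n)"
    by (rule conv)
  have "(1 + norm w) / 2 = 1 + (- 2 * pi * y / h)"
    using h by (simp add: y_def field_simps)
  also have "\<dots> \<le> exp (- 2 * pi * y / h)"
    by (rule exp_ge_add_one_self)
  finally have "norm w < norm (q_param h (\<i> * of_real y))"
    using w by (simp add: norm_q_param)
  then show ?thesis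
    using powser_insidea[OF s] by blast
qed

lemma q_param_tendsto_0:
  assumes "h > 0"
  shows "((\<lambda>T::real. q_param h (of_real x + \<i> * of_real T)) \<longlongrightarrow> 0) at_top"
proof -
  have "filterlim (\<lambda>T::real. (2 * pi / h) * T) at_top at_top"
    using assms by (intro filterlim_tendsto_pos_mult_at_top[OF tendsto_const] filterlim_ident) auto
  then have "filterlim (\<lambda>T::real. - ((2 * pi / h) * T)) at_bot at_top"
    by (simp add: filterlim_uminus_at_bot)
  then have "((\<lambda>T::real. exp (- ((2 * pi / h) * T))) \<longlongrightarrow> 0) at_top"
    by (rule filterlim_compose[OF exp_at_bot])
  moreover have "norm (q_param h (of_real x + \<i> * of_real T)) = exp (- ((2 * pi / h) * T))" for T
    by (simp add: norm_q_param)
  ultimately have "((\<lambda>T::real. norm (q_param h (of_real x + \<i> * of_real T))) \<longlongrightarrow> 0) at_top"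
    by simp
  then show ?thesis
    by (rule tendsto_norm_zero_cancel)
qed

text \<open>Termwise integration: \<open>\<Sum> b\<^sub>n q\<^sup>n\<close> has the primitive \<open>\<Sum> b\<^sub>n h/(2\<pi>in) q\<^sup>n\<close>, a power series
  in \<open>q\<close> without constant term, hence tending to \<open>0\<close> as \<open>q \<rightarrow> 0\<close>.\<close>
lemma decaying_primitive_of_q_expansion:
  assumes h: "h > 0"
    and sums: "\<And>z. z \<in> uhp \<Longrightarrow> (\<lambda>n. b n * q_param h z ^ n) sums F z"
    and b0: "b 0 = 0"
  shows "\<exists>G. decaying_primitive G F"
proof -
  define c where "c n = b n * of_nat h / (2 * pi * \<i> * of_nat n)" for n
  define P where "P w = (\<Sum>n. c n * w ^ n)" for w
  have c_le: "norm (c n * w ^ n) \<le> norm (b n * w ^ n) * (h / (2 * pi))" for n w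
  proof (cases "n = 0")
    case False
    then have "norm (c n * w ^ n) = norm (b n * w ^ n) * (h / (2 * pi)) / n"
      by (simp add: c_def norm_mult norm_divide norm_power)
    also have "\<dots> \<le> norm (b n * w ^ n) * (h / (2 * pi)) / 1"
      using False h by (intro divide_left_mono) auto
    finally show ?thesis by simp
  qed (use h in \<open>simp add: c_def\<close>)
  have c_summable: "summable (\<lambda>n. c n * w ^ n)" if "norm w < 1" for w
  proof (rule summable_norm_cancel, rule summable_comparison_test)
    show "summable (\<lambda>n. norm (b n * w ^ n) * (h / (2 * pi)))"
      using abs_summable_of_q_expansion[OF h _ that, of b] sums sums_summable
      by (intro summable_mult2) blast
  qed (use c_le in auto)
  have P_deriv: "(P has_field_derivative (\<Sum>n. diffs c n * w ^ n)) (at w)" if "norm w < 1" for w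
    unfolding P_def by (rule termdiffs_strong'[OF c_summable that])
  have diffs_c: "diffs c n = b (Suc n) * of_nat h / (2 * pi * \<i>)" for n
    by (simp add: diffs_def c_def del: of_nat_Suc)
  define G where "G z = P (q_param h z)" for z
  have "(G has_field_derivative F z) (at z)" if z: "z \<in> uhp" for z
  proof -
    let ?q = "q_param h z"
    have q0: "?q \<noteq> 0" by (simp add: q_param_def)
    have "(\<lambda>n. b (Suc n) * ?q ^ Suc n) sums F z"
      using sums[OF z] b0 by (subst sums_Suc_iff) simp
    then have "(\<lambda>n. b (Suc n) * ?q ^ Suc n / ?q * (of_nat h / (2 * pi * \<i>)))
        sums (F z / ?q * (of_nat h / (2 * pi * \<i>)))"
      by (intro sums_mult2 sums_divide)
    moreover have "b (Suc n) * ?q ^ Suc n / ?q * (of_nat h / (2 * pi * \<i>)) = diffs c n * ?q ^ n" for n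
      using q0 by (simp add: diffs_c field_simps)
    ultimately have diffs_sum: "(\<Sum>n. diffs c n * ?q ^ n) = F z / ?q * (of_nat h / (2 * pi * \<i>))"
      using sums_unique by force
    have "(q_param h has_field_derivative ?q * (2 * pi * \<i> / of_nat h)) (at z)"
      unfolding q_param_def using h by (auto intro!: derivative_eq_intros)
    from DERIV_chain2[OF P_deriv[OF norm_q_param_less_1[OF h z]] this]
    show ?thesis
      using q0 h unfolding G_def diffs_sum by (simp add: field_simps)
  qed
  moreover have "((\<lambda>T::real. G (of_real x + \<i> * of_real T)) \<longlongrightarrow> 0) at_top" for x
  proof -
    have "P 0 = 0" unfolding P_def by (subst powser_zero) (simp add: c_def)
    moreover have "isCont P 0" using P_deriv[of 0] DERIV_isCont by simp
    ultimately show ?thesis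
      unfolding G_def using isCont_tendsto_compose q_param_tendsto_0[OF h] by fastforce
  qed
  ultimately show ?thesis
    unfolding decaying_primitive_def by blast
qed

lemma cusp_form2_decaying_primitive:
  assumes "cusp_form2 N F"
  obtains G where "decaying_primitive G F"
proof -
  have "(1, 0, 0, 1) \<in> SL2Z" by (simp add: SL2Z_def mdet_def)
  moreover have "slash2 F (1, 0, 0, 1) = F"
    by (rule ext) (simp add: slash2_def mdet_def moeb_def)
  ultimately have "vanishing_expansion F"
    using assms unfolding cusp_form2_def by metis
  then obtain h :: nat and b where h: "h > 0"
    and hb: "\<forall>z\<in>uhp. (\<lambda>n. b n * exp (2 * pi * \<i> * of_nat n * z / of_nat h)) sums F z \<and> b 0 = 0"
    unfolding vanishing_expansion_def by blast
  have "\<i> \<in> uhp" by (simp add: uhp_def)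
  with hb have "b 0 = 0" by blast
  moreover have "\<And>z. z \<in> uhp \<Longrightarrow> (\<lambda>n. b n * q_param h z ^ n) sums F z"
    using hb unfolding exp_eq_q_param_power by blast
  ultimately show ?thesis
    using decaying_primitive_of_q_expansion[OF h] that by blast
qed

subsection \<open>The Eichler integral\<close>

lemma decaying_primitive_tendsto_0:
  assumes "decaying_primitive G F" and "filterlim f at_top L"
  shows "((\<lambda>t. G (of_real x + \<i> * of_real (f t))) \<longlongrightarrow> 0) L"
  using assms filterlim_compose[of "\<lambda>T. G (of_real x + \<i> * of_real T)" "nhds 0" at_top f L]
  unfolding decaying_primitive_def by blast

lemma int_to_inf_decaying_primitive:
  assumes G: "decaying_primitive G F" and w: "w \<in> uhp"
  shows "int_to_inf F w = - G w"
proof -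
  have "\<forall>\<^sub>F T in at_top. contour_integral (linepath w (w + \<i> * of_real T)) F = G (w + \<i> * of_real T) - G w"
    using eventually_ge_at_top[of "0::real"]
  proof eventually_elim
    case (elim T)
    have "w + \<i> * of_real T \<in> uhp" using w elim by (simp add: uhp_def)
    then have "path_image (linepath w (w + \<i> * of_real T)) \<subseteq> uhp"
      using closed_segment_subset[OF w _ convex_uhp] by simp
    then show ?case
      using G contour_integral_primitive[of uhp G F "linepath w (w + \<i> * of_real T)"]
      by (intro contour_integral_unique) (simp add: decaying_primitive_def has_field_derivative_at_within)
  qed
  moreover have "((\<lambda>T::real. G (w + \<i> * of_real T)) \<longlongrightarrow> 0) at_top"
  proof -
    have "filterlim (\<lambda>T::real. Im w + T) at_top at_top"
      by (rule filterlim_tendsto_add_at_top[OF tendsto_const filterlim_ident])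
    from decaying_primitive_tendsto_0[OF G this, of "Re w"]
    have "((\<lambda>T::real. G (of_real (Re w) + \<i> * of_real (Im w + T))) \<longlongrightarrow> 0) at_top" .
    moreover have "of_real (Re w) + \<i> * of_real (Im w + T) = w + \<i> * of_real T" for T
      by (simp add: complex_eq_iff)
    ultimately show ?thesis by simp
  qed
  ultimately have "((\<lambda>T::real. contour_integral (linepath w (w + \<i> * of_real T)) F) \<longlongrightarrow> - G w) at_top"
    using tendsto_cong tendsto_diff[OF _ tendsto_const, of _ 0 at_top "G w"] by fastforce
  then show ?thesis
    unfolding int_to_inf_def by (intro tendsto_Lim) auto
qed

lemma eichler_decaying_primitive:
  "decaying_primitive G F \<Longrightarrow> w \<in> uhp \<Longrightarrow> eichler F w = 2 * pi * \<i> * G w"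
  by (simp add: eichler_def int_to_inf_decaying_primitive)

subsection \<open>Atkin--Lehner type transformations\<close>

lemma Im_moeb:
  "Im (moeb (A, B, C, D) \<tau>) = of_int (mdet (A, B, C, D)) * Im \<tau> / (cmod (of_int C * \<tau> + of_int D))\<^sup>2"
  unfolding moeb_def mdet_def prod.case Im_divide cmod_power2
  by (simp add: algebra_simps power2_eq_square)

lemma moeb_denom_nonzero:
  assumes "mdet (A, B, C, D) \<noteq> 0" and "\<tau> \<in> uhp"
  shows "of_int C * \<tau> + of_int D \<noteq> 0"
proof (cases "C = 0")
  case True
  then show ?thesis using assms(1) by (simp add: mdet_def)
next
  case False
  then have "Im (of_int C * \<tau> + of_int D) \<noteq> 0"
    using assms(2) by (simp add: uhp_def)
  then show ?thesis by (metis zero_complex.sel(2))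
qed

lemma moeb_in_uhp:
  assumes "mdet (A, B, C, D) > 0" and "\<tau> \<in> uhp"
  shows "moeb (A, B, C, D) \<tau> \<in> uhp"
proof -
  have "(cmod (of_int C * \<tau> + of_int D))\<^sup>2 > 0"
    using moeb_denom_nonzero[of A B C D \<tau>] assms by simp
  then show ?thesis
    using assms unfolding uhp_def by (simp add: Im_moeb)
qed

lemma moeb_has_field_derivative:
  assumes "mdet (A, B, C, D) \<noteq> 0" and "\<tau> \<in> uhp"
  shows "(moeb (A, B, C, D) has_field_derivative of_int (mdet (A, B, C, D)) / (of_int C * \<tau> + of_int D)\<^sup>2) (at \<tau>)"
proof -
  have "((\<lambda>\<tau>. (of_int A * \<tau> + of_int B) / (of_int C * \<tau> + of_int D)) has_field_derivative
      (of_int A * (of_int C * \<tau> + of_int D) - (of_int A * \<tau> + of_int B) * of_int C) / (of_int C * \<tau> + of_int D)\<^sup>2) (at \<tau>)"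
    using moeb_denom_nonzero[OF assms] by (auto intro!: derivative_eq_intros simp: power2_eq_square)
  moreover have "of_int A * (of_int C * \<tau> + of_int D) - (of_int A * \<tau> + of_int B) * of_int C
      = (of_int (mdet (A, B, C, D)) :: complex)"
    by (simp add: mdet_def algebra_simps)
  ultimately show ?thesis
    unfolding moeb_def[abs_def] by simp
qed

text \<open>\<open>F|\<^sub>2M = \<lambda>F\<close> is the statement \<open>(G \<circ> M)' = \<lambda>G'\<close>.\<close>
lemma decaying_primitive_slash_eigen_constant:
  assumes G: "decaying_primitive G F" and det: "mdet (A, B, C, D) > 0"
    and eig: "\<forall>w\<in>uhp. slash2 F (A, B, C, D) w = lam * F w"
  obtains K where "\<And>\<tau>. \<tau> \<in> uhp \<Longrightarrow> G (moeb (A, B, C, D) \<tau>) = lam * G \<tau> + K"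
proof -
  have G': "\<And>w. w \<in> uhp \<Longrightarrow> (G has_field_derivative F w) (at w)"
    using G unfolding decaying_primitive_def by blast
  have "((\<lambda>\<tau>. G (moeb (A, B, C, D) \<tau>) - lam * G \<tau>) has_field_derivative 0) (at \<tau> within uhp)"
    if \<tau>: "\<tau> \<in> uhp" for \<tau>
  proof -
    have "((\<lambda>\<tau>. G (moeb (A, B, C, D) \<tau>) - lam * G \<tau>) has_field_derivative
        F (moeb (A, B, C, D) \<tau>) * (of_int (mdet (A, B, C, D)) / (of_int C * \<tau> + of_int D)\<^sup>2) - lam * F \<tau>) (at \<tau>)"
      using DERIV_chain2[OF G'[OF moeb_in_uhp[OF det \<tau>]] moeb_has_field_derivative[OF _ \<tau>]] G'[OF \<tau>] det
      by (auto intro!: derivative_eq_intros)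
    moreover have "F (moeb (A, B, C, D) \<tau>) * (of_int (mdet (A, B, C, D)) / (of_int C * \<tau> + of_int D)\<^sup>2) = lam * F \<tau>"
      using eig \<tau> unfolding slash2_def by (auto simp: mult.commute)
    ultimately show ?thesis
      by (simp add: has_field_derivative_at_within)
  qed
  then obtain K where "\<forall>\<tau>\<in>uhp. G (moeb (A, B, C, D) \<tau>) - lam * G \<tau> = K"
    using has_field_derivative_zero_constant[OF convex_uhp] by blast
  then show ?thesis
    using that by (metis diff_add_cancel add.commute)
qed

lemma moeb_upper_triangular_imaginary:
  assumes "D \<noteq> 0"
  shows "moeb (A, B, 0, D) (\<i> * of_real T) = of_real (B / D) + \<i> * of_real (A / D * T)"
  using assms unfolding moeb_def by (simp add: field_simps complex_eq_iff)

lemma moeb_above_cusp: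
  assumes C: "C \<noteq> 0" and \<epsilon>: "\<epsilon> \<noteq> 0"
  shows "moeb (A, B, C, D) (of_real (- D / C) + \<i> * of_real \<epsilon>)
    = of_real (A / C) + \<i> * of_real (mdet (A, B, C, D) / C\<^sup>2 * inverse \<epsilon>)"
proof -
  define s where "s = - real_of_int D / real_of_int C"
  have den: "of_int C * (of_real s + \<i> * of_real \<epsilon>) + of_int D = \<i> * of_real (C * \<epsilon>)"
    using C unfolding s_def by (simp add: complex_eq_iff)
  have num: "of_int A * (of_real s + \<i> * of_real \<epsilon>) + of_int B
      = (of_real (A / C) + \<i> * of_real ((A * D - B * C) / C\<^sup>2 * inverse \<epsilon>)) * (\<i> * of_real (C * \<epsilon>))"
    using C \<epsilon> by (simp add: complex_eq_iff s_def field_simps power2_eq_square)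
  have nz: "\<i> * of_real (C * \<epsilon>) \<noteq> 0"
    using C \<epsilon> by simp
  have "moeb (A, B, C, D) (of_real s + \<i> * of_real \<epsilon>)
      = (of_int A * (of_real s + \<i> * of_real \<epsilon>) + of_int B) / (\<i> * of_real (C * \<epsilon>))"
    unfolding moeb_def prod.case den ..
  also have "\<dots> = of_real (A / C) + \<i> * of_real ((A * D - B * C) / C\<^sup>2 * inverse \<epsilon>)"
    by (subst nonzero_divide_eq_eq[OF nz]) (rule num)
  finally show ?thesis
    unfolding s_def mdet_def by simp
qed

lemma eigen_constant_eq_0_if_fixes_infinity:
  assumes G: "decaying_primitive G F" and det: "mdet (A, B, 0, D) > 0"
    and K: "\<And>\<tau>. \<tau> \<in> uhp \<Longrightarrow> G (moeb (A, B, 0, D) \<tau>) = lam * G \<tau> + K"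
  shows "K = 0"
proof -
  have AD: "A * D > 0" using det by (simp add: mdet_def)
  then have D: "D \<noteq> 0" by auto
  have "filterlim (\<lambda>T::real. A / D * T) at_top at_top"
    using AD by (intro filterlim_tendsto_pos_mult_at_top[OF tendsto_const _ filterlim_ident])
      (simp add: zero_less_divide_iff zero_less_mult_iff)
  from decaying_primitive_tendsto_0[OF G this]
  have lim_moeb: "((\<lambda>T::real. G (moeb (A, B, 0, D) (\<i> * of_real T))) \<longlongrightarrow> 0) at_top"
    unfolding moeb_upper_triangular_imaginary[OF D] .
  have lim: "((\<lambda>T::real. G (\<i> * of_real T)) \<longlongrightarrow> 0) at_top"
    using decaying_primitive_tendsto_0[OF G filterlim_ident, of 0] by simp
  have "\<forall>\<^sub>F T in at_top. G (moeb (A, B, 0, D) (\<i> * of_real T)) - lam * G (\<i> * of_real T) = K"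
    using eventually_gt_at_top[of "0::real"] by eventually_elim (simp add: K uhp_def)
  then have "((\<lambda>T::real. G (moeb (A, B, 0, D) (\<i> * of_real T)) - lam * G (\<i> * of_real T)) \<longlongrightarrow> 0 - lam * 0) at_top
      \<longleftrightarrow> ((\<lambda>T::real. K) \<longlongrightarrow> 0 - lam * 0) at_top"
    by (rule tendsto_cong)
  then have "((\<lambda>T::real. K) \<longlongrightarrow> 0 - lam * 0) at_top"
    using tendsto_diff[OF lim_moeb tendsto_mult[OF tendsto_const lim]] by blast
  then show ?thesis
    by (simp add: tendsto_const_iff)
qed

text \<open>Approaching the cusp \<open>-D/C\<close> vertically, \<open>G \<circ> M\<close> tends to \<open>0\<close> while \<open>G\<close> tends to \<open>\<Omega>/(2\<pi>i)\<close>.\<close>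
lemma Omega_eq_eigen_constant:
  assumes G: "decaying_primitive G F" and det: "mdet (A, B, C, D) > 0"
    and K: "\<And>\<tau>. \<tau> \<in> uhp \<Longrightarrow> G (moeb (A, B, C, D) \<tau>) = lam * G \<tau> + K"
    and lam2: "lam * lam = 1"
  shows "Omega F (A, B, C, D) = - 2 * pi * \<i> * (lam * K)"
proof (cases "C = 0")
  case True
  then have "K = 0"
    using eigen_constant_eq_0_if_fixes_infinity G det K by blast
  then show ?thesis
    using True by (simp add: Omega_def)
next
  case False
  define s where "s = - real_of_int D / real_of_int C"
  define y where "y \<epsilon> = real_of_int (mdet (A, B, C, D)) / (real_of_int C)\<^sup>2 * inverse \<epsilon>" for \<epsilon>
  have "real_of_int (mdet (A, B, C, D)) / (real_of_int C)\<^sup>2 > 0"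
    using det False by simp
  then have "filterlim y at_top (at_right 0)"
    unfolding y_def by (rule filterlim_tendsto_pos_mult_at_top[OF tendsto_const _ filterlim_inverse_at_top_right])
  from decaying_primitive_tendsto_0[OF G this, of "A / C"]
  have "((\<lambda>\<epsilon>. lam * (K - G (of_real (A / C) + \<i> * of_real (y \<epsilon>)))) \<longlongrightarrow> lam * (K - 0)) (at_right 0)"
    by (intro tendsto_mult tendsto_diff tendsto_const)
  moreover have "\<forall>\<^sub>F \<epsilon> in at_right 0.
      lam * (K - G (of_real (A / C) + \<i> * of_real (y \<epsilon>))) = int_to_inf F (of_real s + \<i> * of_real \<epsilon>)"
    using eventually_at_right_less[of 0]
  proof eventually_elim
    case (elim \<epsilon>)
    then have \<epsilon>: "of_real s + \<i> * of_real \<epsilon> \<in> uhp"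
      by (simp add: uhp_def)
    have "G (of_real (A / C) + \<i> * of_real (y \<epsilon>)) = lam * G (of_real s + \<i> * of_real \<epsilon>) + K"
      using K[OF \<epsilon>] moeb_above_cusp[OF False, of \<epsilon> A B D] elim by (simp add: s_def y_def)
    then show ?case
      using int_to_inf_decaying_primitive[OF G \<epsilon>] lam2 by (simp add: algebra_simps)
  qed
  ultimately have "((\<lambda>\<epsilon>. int_to_inf F (of_real s + \<i> * of_real \<epsilon>)) \<longlongrightarrow> lam * K) (at_right 0)"
    using tendsto_cong by fastforce
  then have "Lim (at_right 0) (\<lambda>\<epsilon>. int_to_inf F (of_real s + \<i> * of_real \<epsilon>)) = lam * K"
    by (intro tendsto_Lim) auto
  then show ?thesis
    using False unfolding Omega_def s_def by simp
qed

lemma eichler_moeb: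
  assumes G: "decaying_primitive G F" and det: "mdet (A, B, C, D) > 0"
    and eig: "\<forall>w\<in>uhp. slash2 F (A, B, C, D) w = lam * F w"
    and lam2: "lam * lam = 1" and z: "z \<in> uhp"
  shows "eichler F (moeb (A, B, C, D) z) = lam * (eichler F z - Omega F (A, B, C, D))"
proof -
  obtain K where K: "\<And>\<tau>. \<tau> \<in> uhp \<Longrightarrow> G (moeb (A, B, C, D) \<tau>) = lam * G \<tau> + K"
    using decaying_primitive_slash_eigen_constant[OF G det eig] by blast
  have "eichler F (moeb (A, B, C, D) z) = 2 * pi * \<i> * (lam * G z + K)"
    using eichler_decaying_primitive[OF G moeb_in_uhp[OF det z]] K[OF z] by simp
  also have "\<dots> = lam * (2 * pi * \<i> * G z + 2 * pi * \<i> * (lam * K))"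
    using lam2 by (simp add: algebra_simps)
  also have "\<dots> = lam * (eichler F z - Omega F (A, B, C, D))"
    using eichler_decaying_primitive[OF G z] Omega_eq_eigen_constant[OF G det K lam2] by simp
  finally show ?thesis .
qed

theorem theorem2:
  fixes N :: nat and F :: "complex \<Rightarrow> complex" and aE :: "nat \<Rightarrow> int"
    and degphi :: nat and normF :: real
    and q \<alpha> :: nat and a b c d :: int and lamq :: int and z :: complex
  assumes cusp: "cusp_form2 N F"
    and qexp: "has_q_expansion F (\<lambda>n. of_int (aE n))"
    and normalized: "aE 1 = 1"
    and normF_pos: "normF > 0"
    and q_pos: "q > 0" and q_dvd: "q dvd N"
    and exact: "q ^ \<alpha> dvd N" and exact2: "coprime (q ^ \<alpha>) (N div q ^ \<alpha>)"
    and det: "mdet (int q ^ \<alpha> * a, b, int N * c, int q ^ \<alpha> * d) = int q ^ \<alpha>"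
    and lam: "lamq = 1 \<or> lamq = -1"
    and eig: "\<forall>w\<in>uhp. slash2 F (int q ^ \<alpha> * a, b, int N * c, int q ^ \<alpha> * d) w = of_int lamq * F w"
    and z: "z \<in> uhp"
  shows "Zhat N F (real degphi / (4 * pi * normF^2))
            (moeb (int q ^ \<alpha> * a, b, int N * c, int q ^ \<alpha> * d) z)
       = Zplus (period_lattice N F)
           (of_int lamq * (eichler F z - Omega F (int q ^ \<alpha> * a, b, int N * c, int q ^ \<alpha> * d)))
         - complex_of_real (real degphi / (4 * pi * normF^2))
           * cnj (of_int lamq * (eichler F z - Omega F (int q ^ \<alpha> * a, b, int N * c, int q ^ \<alpha> * d)))"
proof -
  \<comment> \<open>Only the cusp form property, the positive determinant and the eigenvalue relation matter;
      the remaining hypotheses merely describe the setting of the curve \<open>E\<close>.\<close>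
  obtain G where G: "decaying_primitive G F"
    using cusp_form2_decaying_primitive[OF cusp] .
  have "mdet (int q ^ \<alpha> * a, b, int N * c, int q ^ \<alpha> * d) > 0"
    using det q_pos by simp
  moreover have "of_int lamq * of_int lamq = (1 :: complex)"
    using lam by auto
  ultimately have "eichler F (moeb (int q ^ \<alpha> * a, b, int N * c, int q ^ \<alpha> * d) z)
      = of_int lamq * (eichler F z - Omega F (int q ^ \<alpha> * a, b, int N * c, int q ^ \<alpha> * d))"
    using eichler_moeb[OF G _ eig _ z] by blast
  then show ?thesis
    unfolding Zhat_def Zfull_def by simp
qed

end
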